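(* Let $(X_1,Y_1),\dots,(X_n,Y_n)$ be i.i.d. samples from a continuous joint density $f$ on $\mathbb{R}^2$, and let $\hat f_{n,\ell}$ be the partitioned sample-spacing density estimator defined below. Assume that as $n\to\infty$, $\ell(n)\to\infty$, $\ell(n)^2=o(n)$, $n_k\to\infty$, and $m_k=\lfloor\sqrt{n_k}+1/2\rfloor$. Then $$\lim_{n\to\infty}\int_{\mathbb{R}^2}\hat f_{n,\ell}(x,y)\,dx\,dy=1.$$
   Context: Partitioned estimator: for an integer $\ell=\ell(n)$, divide the range $[\min_v X_v,\max_v X_v]$ into $\ell$ equal-width intervals (width $(\max X-\min X)/\ell$) and likewise the range of the $Y_v$; the products give $\ell^2$ rectangles $P_1,\dots,P_{\ell^2}$. Let $n_k$ be the number of samples in $P_k$, $m_k$ a positive integer spacing parameter, and $x^k_{(1)}\le\dots\le x^k_{(n_k)}$, $y^k_{(1)}\le\dots\le y^k_{(n_k)}$ the order statistics of the $x$- and $y$-coordinates of the samples in $P_k$, with the convention $x^k_{(i)}=x^k_{(1)}$ for $i<1$, $x^k_{(i)}=x^k_{(n_k)}$ for $i>n_k$ (same for $y$). Set $\xi_i^k=\frac{1}{2m_k}\sum_{r=i-m_k}^{i+m_k-1}x^k_{(r)}$, $\eta_j^k=\frac{1}{2m_k}\sum_{r=j-m_k}^{j+m_k-1}y^k_{(r)}$ for $1\le i,j\le n_k$, and boundary points $\xi_0^k=x^k_{(1)}$, $\xi^k_{n_k+1}=x^k_{(n_k)}$, $\eta_0^k=y^k_{(1)}$, $\eta^k_{n_k+1}=y^k_{(n_k)}$.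 For $(x,y)\in(\xi_i^k,\xi_{i+1}^k]\times(\eta_j^k,\eta_{j+1}^k]$ ($0\le i,j\le n_k$), $$\hat f_{n,\ell}(x,y)=\frac{n_k}{n}\cdot\frac{4m_k^2}{n_k^2\,(x^k_{(i+m_k)}-x^k_{(i-m_k)})(y^k_{(j+m_k)}-y^k_{(j-m_k)})},$$ and $\hat f_{n,\ell}=0$ outside all such cells. *)

theory Defs
  imports "HOL-Probability.Probability" "HOL-Library.Landau_Symbols"
begin

definition xmin :: "(nat \<Rightarrow> real \<times> real) \<Rightarrow> nat \<Rightarrow> real" where
  "xmin s n = Min ((\<lambda>v. fst (s v)) ` {..<n})"
definition xmax :: "(nat \<Rightarrow> real \<times> real) \<Rightarrow> nat \<Rightarrow> real" where
  "xmax s n = Max ((\<lambda>v. fst (s v)) ` {..<n})"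
definition ymin :: "(nat \<Rightarrow> real \<times> real) \<Rightarrow> nat \<Rightarrow> real" where
  "ymin s n = Min ((\<lambda>v. snd (s v)) ` {..<n})"
definition ymax :: "(nat \<Rightarrow> real \<times> real) \<Rightarrow> nat \<Rightarrow> real" where
  "ymax s n = Max ((\<lambda>v. snd (s v)) ` {..<n})"

text \<open>Index (0-based) of the equal-width interval of [lo,hi] split into l pieces that
  contains t; intervals are half-open [a,b) except the last one, which is closed.\<close>
definition cell_index :: "real \<Rightarrow> real \<Rightarrow> nat \<Rightarrow> real \<Rightarrow> nat" where
  "cell_index lo hi l t =
     (if hi \<le> lo then 0 else min (l - 1) (nat \<lfloor>(t - lo) / (hi - lo) * real l\<rfloor>))"

definition rect_members :: "nat \<Rightarrow> (nat \<Rightarrow> real \<times> real) \<Rightarrow> nat \<Rightarrow> nat \<times> nat \<Rightarrow> nat set" where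
  "rect_members l s n k =
     {v. v < n \<and> cell_index (xmin s n) (xmax s n) l (fst (s v)) = fst k
               \<and> cell_index (ymin s n) (ymax s n) l (snd (s v)) = snd k}"

text \<open>Order statistic x_(r) (1-based) of a sorted list, with the clamping convention
  x_(r) = x_(1) for r < 1 and x_(r) = x_(len) for r > len.\<close>
definition ord_stat :: "real list \<Rightarrow> int \<Rightarrow> real" where
  "ord_stat xs r = xs ! (nat (max 1 (min (int (length xs)) r)) - 1)"

definition ss_point :: "real list \<Rightarrow> nat \<Rightarrow> int \<Rightarrow> real" where
  "ss_point xs m i =
     (if i = 0 then ord_stat xs 1
      else if i = int (length xs) + 1 then ord_stat xs (int (length xs))
      else (\<Sum>r\<in>{i - int m .. i + int m - 1}. ord_stat xs r) / (2 * real m))"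

definition part_est :: "nat \<Rightarrow> (nat \<Rightarrow> real \<times> real) \<Rightarrow> nat \<Rightarrow> real \<times> real \<Rightarrow> real" where
  "part_est l s n z =
    (\<Sum>k\<in>{..<l} \<times> {..<l}.
      let I = rect_members l s n k;
          nk = card I;
          m = nat \<lfloor>sqrt (real nk) + 1/2\<rfloor>;
          xs = sort (map (\<lambda>v. fst (s v)) (sorted_list_of_set I));
          ys = sort (map (\<lambda>v. snd (s v)) (sorted_list_of_set I))
      in \<Sum>i\<in>{0 .. int nk}. \<Sum>j\<in>{0 .. int nk}.
           (if ss_point xs m i < fst z \<and> fst z \<le> ss_point xs m (i + 1)
               \<and> ss_point ys m j < snd z \<and> snd z \<le> ss_point ys m (j + 1)
            then (real nk / real n) * (4 * (real m)^2) /
                 ((real nk)^2 * (ord_stat xs (i + int m) - ord_stat xs (i - int m))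
                              * (ord_stat ys (j + int m) - ord_stat ys (j - int m)))
            else 0))"

end

theory Submission
  imports Defs
begin

text \<open>Almost surely no two sample points share an x- or a y-coordinate, since two independent
  draws from a density tie with probability zero. For a sample without ties the integral of the
  estimator can be computed exactly. On the rectangle \<open>P\<^sub>k\<close> the estimator is \<open>n\<^sub>k/n\<close> times the
  product of two one-dimensional sample-spacing estimators, so it integrates to \<open>n\<^sub>k/n\<close> times the
  product of their masses. A one-dimensional mass telescopes: the interior cell \<open>(\<xi>_i, \<xi>_(i+1)]\<close>
  has width \<open>(x_(i+m) - x_(i-m)) / 2m\<close> and so carries mass exactly \<open>1/n\<^sub>k\<close>, while each of the two
  boundary cells carries mass between \<open>0\<close> and \<open>2m/n\<^sub>k\<close>. With \<open>m\<^sub>k \<approx> \<surd>n\<^sub>k\<close> both masses lie within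
  \<open>5/\<surd>n\<^sub>k\<close> of 1, and averaging over the rectangles with weights \<open>n\<^sub>k/n\<close> gives the limit.\<close>

lemma ord_stat_mono:
  assumes "sorted xs" "xs \<noteq> []" "r \<le> r'"
  shows "ord_stat xs r \<le> ord_stat xs r'"
proof -
  have "1 \<le> int (length xs)" using assms(2) by (cases xs) auto
  then have "nat (max 1 (min (int (length xs)) r')) - 1 < length xs" by linarith
  moreover have "nat (max 1 (min (int (length xs)) r)) - 1 \<le> nat (max 1 (min (int (length xs)) r')) - 1"
    using assms(3) by linarith
  ultimately show ?thesis
    unfolding ord_stat_def by (intro sorted_nth_mono[OF assms(1)])
qed

lemma ord_stat_strict_mono:
  assumes "sorted xs" "distinct xs" "1 \<le> r" "r < r'" "r' \<le> int (length xs)"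
  shows "ord_stat xs r < ord_stat xs r'"
proof -
  have "sorted_wrt (<) xs" using assms(1,2) by (simp add: strict_sorted_iff)
  moreover have "nat r - 1 < nat r' - 1" "nat r' - 1 < length xs" using assms by linarith+
  moreover have "max 1 (min (int (length xs)) r) = r" "max 1 (min (int (length xs)) r') = r'"
    using assms by linarith+
  ultimately show ?thesis
    unfolding ord_stat_def by (simp add: sorted_wrt_nth_less)
qed

lemma ord_stat_le_one: "r \<le> 1 \<Longrightarrow> ord_stat xs r = ord_stat xs 1"
  unfolding ord_stat_def by (simp add: max_def min_def)

lemma ord_stat_ge_length: "int (length xs) \<le> r \<Longrightarrow> ord_stat xs r = ord_stat xs (int (length xs))"
  unfolding ord_stat_def by (simp add: min_def)

lemma ss_point_interior_eq:
  "1 \<le> i \<Longrightarrow> i \<le> int (length xs) \<Longrightarrow>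
     ss_point xs m i = (\<Sum>r\<in>{i - int m .. i + int m - 1}. ord_stat xs r) / (2 * real m)"
  unfolding ss_point_def by simp

lemma ss_point_diff:
  assumes "1 \<le> i" "i + 1 \<le> int (length xs)"
  shows "ss_point xs m (i + 1) - ss_point xs m i
           = (ord_stat xs (i + int m) - ord_stat xs (i - int m)) / (2 * real m)"
proof -
  let ?S = "\<lambda>a b. \<Sum>r\<in>{a..b}. ord_stat xs r"
  have "{i - int m .. i + int m} = insert (i + int m) {i - int m .. i + int m - 1}" by auto
  then have upper: "?S (i - int m) (i + int m) = ord_stat xs (i + int m) + ?S (i - int m) (i + int m - 1)"
    by simp
  have "{i - int m .. i + int m} = insert (i - int m) {i + 1 - int m .. i + int m}" by auto
  then have lower: "?S (i - int m) (i + int m) = ord_stat xs (i - int m) + ?S (i + 1 - int m) (i + int m)"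
    by simp
  have "ss_point xs m (i + 1) = ?S (i + 1 - int m) (i + int m) / (2 * real m)"
    using ss_point_interior_eq[of "i + 1" xs m] assms by (simp add: add_ac)
  moreover have "ss_point xs m i = ?S (i - int m) (i + int m - 1) / (2 * real m)"
    by (rule ss_point_interior_eq) (use assms in auto)
  ultimately show ?thesis
    using upper lower by (simp add: diff_divide_distrib[symmetric])
qed

lemma ss_point_interior_bounds:
  assumes "sorted xs" "xs \<noteq> []" "m \<ge> 1" "1 \<le> i" "i \<le> int (length xs)"
  shows "ord_stat xs (i - int m) \<le> ss_point xs m i \<and> ss_point xs m i \<le> ord_stat xs (i + int m - 1)"
proof -
  define R where "R = {i - int m .. i + int m - 1}"
  have card: "real (card R) = 2 * real m" unfolding R_def by simp
  have "r \<in> R \<Longrightarrow> ord_stat xs (i - int m) \<le> ord_stat xs r" for r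
    unfolding R_def by (rule ord_stat_mono[OF assms(1,2)]) simp
  then have "2 * real m * ord_stat xs (i - int m) \<le> (\<Sum>r\<in>R. ord_stat xs r)"
    using sum_bounded_below[of R "ord_stat xs (i - int m)" "ord_stat xs"] card by simp
  moreover have "r \<in> R \<Longrightarrow> ord_stat xs r \<le> ord_stat xs (i + int m - 1)" for r
    unfolding R_def by (rule ord_stat_mono[OF assms(1,2)]) simp
  then have "(\<Sum>r\<in>R. ord_stat xs r) \<le> 2 * real m * ord_stat xs (i + int m - 1)"
    using sum_bounded_above[of R "ord_stat xs" "ord_stat xs (i + int m - 1)"] card by simp
  moreover have "ss_point xs m i = (\<Sum>r\<in>R. ord_stat xs r) / (2 * real m)"
    unfolding R_def by (rule ss_point_interior_eq) (use assms in auto)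
  ultimately show ?thesis
    using assms(3) by (simp add: pos_le_divide_eq pos_divide_le_eq mult.commute)
qed

lemma ord_stat_le_ss_point:
  assumes "sorted xs" "xs \<noteq> []" "m \<ge> 1" "0 \<le> i" "i \<le> int (length xs)"
  shows "ord_stat xs (i - int m) \<le> ss_point xs m i"
proof (cases "i = 0")
  case True
  then show ?thesis using ord_stat_le_one[of "- int m" xs] by (simp add: ss_point_def)
next
  case False
  then show ?thesis using ss_point_interior_bounds[OF assms(1-3)] assms(4,5) by simp
qed

lemma ss_point_le_ord_stat:
  assumes "sorted xs" "xs \<noteq> []" "m \<ge> 1" "1 \<le> i" "i \<le> int (length xs) + 1"
  shows "ss_point xs m i \<le> ord_stat xs (i - 1 + int m)"
proof (cases "i = int (length xs) + 1")
  case True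
  then show ?thesis using ord_stat_ge_length[of xs "i - 1 + int m"] assms(3) by (simp add: ss_point_def)
next
  case False
  then show ?thesis
    using ss_point_interior_bounds[OF assms(1-4)] assms(5) by (simp add: algebra_simps)
qed

lemma ss_point_mono:
  assumes "sorted xs" "xs \<noteq> []" "m \<ge> 1" "0 \<le> i" "i \<le> int (length xs)"
  shows "ss_point xs m i \<le> ss_point xs m (i + 1)"
proof -
  have L: "1 \<le> int (length xs)" using assms(2) by (cases xs) auto
  consider "i = 0" | "i = int (length xs)" | "1 \<le> i" "i + 1 \<le> int (length xs)"
    using assms(4,5) by linarith
  then show ?thesis
  proof cases
    case 1
    then show ?thesis
      using ord_stat_le_ss_point[OF assms(1-3), of 1] ord_stat_le_one[of "1 - int m" xs] L
      by (simp add: ss_point_def)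
  next
    case 2
    then show ?thesis
      using ss_point_le_ord_stat[OF assms(1-3), of i] ord_stat_ge_length[of xs "i - 1 + int m"] assms(3) L
      by (simp add: ss_point_def)
  next
    case 3
    have "ord_stat xs (i - int m) \<le> ord_stat xs (i + int m)" by (rule ord_stat_mono[OF assms(1,2)]) simp
    then have "0 \<le> (ord_stat xs (i + int m) - ord_stat xs (i - int m)) / (2 * real m)" by simp
    then show ?thesis using ss_point_diff[OF 3, where m = m] by linarith
  qed
qed

subsection \<open>Mass of the one-dimensional sample-spacing estimator\<close>

text \<open>The one-dimensional estimator built from the \<open>L\<close> sorted points \<open>xs\<close> takes the value
  \<open>2m / (L (x_(i+m) - x_(i-m)))\<close> on \<open>(\<xi>_i, \<xi>_(i+1)]\<close>, so this cell carries the mass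
  \<open>spacing_weight xs m i / L\<close>, and \<open>spacing_mass xs m\<close> is its total integral.\<close>

definition spacing_weight :: "real list \<Rightarrow> nat \<Rightarrow> int \<Rightarrow> real" where
  "spacing_weight xs m i = 2 * real m * (ss_point xs m (i + 1) - ss_point xs m i)
                             / (ord_stat xs (i + int m) - ord_stat xs (i - int m))"

definition spacing_mass :: "real list \<Rightarrow> nat \<Rightarrow> real" where
  "spacing_mass xs m = (\<Sum>i\<in>{0..int (length xs)}. spacing_weight xs m i) / real (length xs)"

lemma spacing_weight_bounds:
  assumes "sorted xs" "xs \<noteq> []" "m \<ge> 1" "0 \<le> i" "i \<le> int (length xs)"
  shows "0 \<le> spacing_weight xs m i \<and> spacing_weight xs m i \<le> 2 * real m"
proof -
  define D where "D = ord_stat xs (i + int m) - ord_stat xs (i - int m)"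
  define \<Delta> where "\<Delta> = ss_point xs m (i + 1) - ss_point xs m i"
  have "0 \<le> \<Delta>" unfolding \<Delta>_def using ss_point_mono[OF assms] by simp
  moreover have "\<Delta> \<le> D"
    using ss_point_le_ord_stat[OF assms(1-3), of "i + 1"] ord_stat_le_ss_point[OF assms] assms(4,5)
    unfolding \<Delta>_def D_def by simp
  ultimately have "0 \<le> \<Delta> / D \<and> \<Delta> / D \<le> 1"
    by (cases "D = 0") (simp_all add: divide_le_eq)
  then have "0 \<le> 2 * real m * (\<Delta> / D) \<and> 2 * real m * (\<Delta> / D) \<le> 2 * real m"
    using mult_left_le[of "\<Delta> / D" "2 * real m"] mult_nonneg_nonneg[of "2 * real m" "\<Delta> / D"] by simp
  moreover have "spacing_weight xs m i = 2 * real m * (\<Delta> / D)"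
    unfolding spacing_weight_def \<Delta>_def D_def by simp
  ultimately show ?thesis by simp
qed

lemma spacing_weight_interior:
  assumes "sorted xs" "distinct xs" "m \<ge> 1" "1 \<le> i" "i + 1 \<le> int (length xs)"
  shows "spacing_weight xs m i = 1"
proof -
  have ne: "xs \<noteq> []" using assms(4,5) by auto
  have "ord_stat xs (i - int m) \<le> ord_stat xs i" by (rule ord_stat_mono[OF assms(1) ne]) simp
  moreover have "ord_stat xs i < ord_stat xs (i + 1)"
    by (rule ord_stat_strict_mono[OF assms(1,2)]) (use assms in auto)
  moreover have "ord_stat xs (i + 1) \<le> ord_stat xs (i + int m)"
    by (rule ord_stat_mono[OF assms(1) ne]) (use assms in simp)
  ultimately have "ord_stat xs (i + int m) - ord_stat xs (i - int m) > 0" by linarith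
  then show ?thesis
    unfolding spacing_weight_def ss_point_diff[OF assms(4,5)] using assms(3) by simp
qed

lemma spacing_weight_sum_bounds:
  assumes "sorted xs" "distinct xs" "m \<ge> 1" "xs \<noteq> []"
  shows "real (length xs) - 1 \<le> (\<Sum>i\<in>{0..int (length xs)}. spacing_weight xs m i)
       \<and> (\<Sum>i\<in>{0..int (length xs)}. spacing_weight xs m i) \<le> real (length xs) - 1 + 4 * real m"
proof -
  define L where "L = int (length xs)"
  have L1: "1 \<le> L" using assms(4) unfolding L_def by (cases xs) auto
  have "{0..L} = insert 0 (insert L {1..L - 1})" using L1 by auto
  then have "(\<Sum>i\<in>{0..L}. spacing_weight xs m i)
      = spacing_weight xs m 0 + spacing_weight xs m L + (\<Sum>i\<in>{1..L - 1}. spacing_weight xs m i)"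
    using L1 by simp
  also have "(\<Sum>i\<in>{1..L - 1}. spacing_weight xs m i) = (\<Sum>i\<in>{1..L - 1}. 1)"
    by (rule sum.cong) (use assms in \<open>auto intro!: spacing_weight_interior simp: L_def\<close>)
  also have "\<dots> = real (length xs) - 1"
    using L1 by (simp add: L_def)
  finally show ?thesis
    using spacing_weight_bounds[OF assms(1,4,3), of 0] spacing_weight_bounds[OF assms(1,4,3), of L] L1
    unfolding L_def by simp
qed

lemma abs_spacing_mass_sub_one_le:
  assumes "sorted xs" "distinct xs" "xs \<noteq> []" "m \<ge> 1" "real m \<le> sqrt (real (length xs)) + 1/2"
  shows "\<bar>spacing_mass xs m - 1\<bar> \<le> 5 / sqrt (real (length xs))"
proof -
  define T where "T = (\<Sum>i\<in>{0..int (length xs)}. spacing_weight xs m i)"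
  define q where "q = sqrt (real (length xs))"
  have "1 \<le> real (length xs)" using assms(3) by (cases xs) auto
  then have q1: "q \<ge> 1" unfolding q_def by simp
  have Lq: "real (length xs) = q * q" unfolding q_def by simp
  have "real m \<le> q + 1/2" using assms(5) unfolding q_def .
  then have "\<bar>T - q * q\<bar> \<le> 5 * q"
    using spacing_weight_sum_bounds[OF assms(1,2,4,3)] q1 unfolding T_def[symmetric] Lq by linarith
  then have "\<bar>T - q * q\<bar> / (q * q) \<le> 5 * q / (q * q)"
    by (rule divide_right_mono) simp
  moreover have "spacing_mass xs m - 1 = (T - q * q) / (q * q)"
    unfolding spacing_mass_def T_def[symmetric] Lq using q1 by (simp add: field_simps)
  ultimately show ?thesis
    using q1 unfolding q_def[symmetric] by (simp add: abs_div)
qed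

lemma round_sqrt_bounds:
  assumes "L \<ge> 1"
  shows "1 \<le> nat \<lfloor>sqrt (real L) + 1/2\<rfloor> \<and> real (nat \<lfloor>sqrt (real L) + 1/2\<rfloor>) \<le> sqrt (real L) + 1/2"
proof -
  have "1 \<le> sqrt (real L)" by (rule real_sqrt_ge_one) (use assms in simp)
  then have "1 \<le> sqrt (real L) + 1/2" by linarith
  then have "1 \<le> \<lfloor>sqrt (real L) + 1/2\<rfloor>" by (simp only: one_le_floor)
  then show ?thesis by linarith
qed

lemma abs_spacing_mass_round_sqrt_sub_one_le:
  assumes "distinct xs" "1 \<le> N" "N \<le> length xs"
  shows "\<bar>spacing_mass (sort xs) (nat \<lfloor>sqrt (real (length xs)) + 1/2\<rfloor>) - 1\<bar> \<le> 5 / sqrt (real N)"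
proof -
  have "sort xs \<noteq> []" using assms(2,3) by (metis length_sort list.size(3) not_one_le_zero order_trans)
  then have "\<bar>spacing_mass (sort xs) (nat \<lfloor>sqrt (real (length xs)) + 1/2\<rfloor>) - 1\<bar>
               \<le> 5 / sqrt (real (length xs))"
    using abs_spacing_mass_sub_one_le[of "sort xs"] round_sqrt_bounds[of "length xs"] assms by simp
  also have "\<dots> \<le> 5 / sqrt (real N)"
    using assms(2,3) by (intro divide_left_mono mult_pos_pos) auto
  finally show ?thesis .
qed

subsection \<open>The integral of the estimator\<close>

lemma indicator_box_eq:
  "(if a1 < fst z \<and> fst z \<le> a2 \<and> b1 < snd z \<and> snd z \<le> b2 then c else 0)
     = (c::real) * indicator ({a1<..a2} \<times> {b1<..b2}) (z::real \<times> real)"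
  by (cases z) (auto simp: indicator_def)

lemma measure_lborel_box:
  "measure (lborel :: (real \<times> real) measure) ({a1<..a2} \<times> {b1<..b2})
     = measure lborel {a1<..a2} * measure lborel {b1<..b2}"
proof -
  have "emeasure (lborel :: (real \<times> real) measure) ({a1<..a2} \<times> {b1<..b2})
      = emeasure lborel {a1<..a2} * emeasure lborel {b1<..b2}"
    unfolding lborel_prod[symmetric] by (rule lborel.emeasure_pair_measure_Times) auto
  then show ?thesis unfolding measure_def by (simp add: enn2real_mult)
qed

lemma integrable_box:
  "integrable lborel (indicator ({a1<..a2} \<times> {b1<..b2}) :: real \<times> real \<Rightarrow> real)"
proof (rule integrable_real_indicator)
  have "{a1<..a2::real} \<times> {b1<..b2::real} \<in> sets (borel \<Otimes>\<^sub>M borel)" by (rule pair_measureI) auto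
  then have "{a1<..a2::real} \<times> {b1<..b2::real} \<in> sets borel" by (simp only: borel_prod)
  then show "{a1<..a2::real} \<times> {b1<..b2::real} \<in> sets lborel" by simp
  show "emeasure lborel ({a1<..a2::real} \<times> {b1<..b2::real}) < \<infinity>"
    by (rule emeasure_bounded_finite) (auto intro!: bounded_Times)
qed

lemma integral_box:
  "(LINT z|lborel. indicator ({a1<..a2} \<times> {b1<..b2}) z :: real)
     = measure lborel {a1<..a2::real} * measure lborel {b1<..b2::real}"
  by (simp add: measure_lborel_box[symmetric])

lemma rectangle_integral:
  assumes "sorted xs" "sorted ys" "length xs = L" "length ys = L" "L > 0 \<Longrightarrow> m \<ge> 1"
  shows "(\<Sum>i\<in>{0 .. int L}. \<Sum>j\<in>{0 .. int L}.
           (real L / real n) * (4 * (real m)^2) /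
                 ((real L)^2 * (ord_stat xs (i + int m) - ord_stat xs (i - int m))
                              * (ord_stat ys (j + int m) - ord_stat ys (j - int m)))
           * (measure lborel {ss_point xs m i <.. ss_point xs m (i + 1)}
              * measure lborel {ss_point ys m j <.. ss_point ys m (j + 1)}))
        = real L / real n * spacing_mass xs m * spacing_mass ys m"
    (is "?lhs = _")
proof (cases "L = 0")
  case False
  then have ne: "xs \<noteq> []" "ys \<noteq> []" and m: "m \<ge> 1" using assms(3-5) by auto
  have "?lhs = (\<Sum>i\<in>{0 .. int L}. \<Sum>j\<in>{0 .. int L}.
                  real L / real n / (real L)^2 * spacing_weight xs m i * spacing_weight ys m j)"
  proof (intro sum.cong refl)
    fix i j assume "i \<in> {0..int L}" "j \<in> {0..int L}"
    then have "ss_point xs m i \<le> ss_point xs m (i + 1)" "ss_point ys m j \<le> ss_point ys m (j + 1)"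
      using ss_point_mono[OF assms(1) ne(1) m] ss_point_mono[OF assms(2) ne(2) m] assms(3,4)
      by auto
    moreover have "a / b * (4 * (real m)^2) / (a^2 * Dx * Dy) * (p * q)
                     = a / b / a^2 * (2 * real m * p / Dx) * (2 * real m * q / Dy)" for a b Dx Dy p q :: real
      by (simp add: divide_inverse inverse_mult_distrib power2_eq_square algebra_simps)
    ultimately show "real L / real n * (4 * (real m)^2) /
                 ((real L)^2 * (ord_stat xs (i + int m) - ord_stat xs (i - int m))
                              * (ord_stat ys (j + int m) - ord_stat ys (j - int m)))
           * (measure lborel {ss_point xs m i <.. ss_point xs m (i + 1)}
              * measure lborel {ss_point ys m j <.. ss_point ys m (j + 1)})
          = real L / real n / (real L)^2 * spacing_weight xs m i * spacing_weight ys m j"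
      by (simp only: measure_lborel_Ioc spacing_weight_def)
  qed
  also have "\<dots> = (\<Sum>i\<in>{0 .. int L}. real L / real n / (real L)^2 * spacing_weight xs m i)
                    * (\<Sum>j\<in>{0 .. int L}. spacing_weight ys m j)"
    by (rule sum_product[symmetric])
  also have "\<dots> = real L / real n * spacing_mass xs m * spacing_mass ys m"
    unfolding spacing_mass_def assms(3,4) by (simp add: sum_distrib_left[symmetric] power2_eq_square)
  finally show ?thesis .
qed simp

lemma part_est_integral:
  "(LINT z|lborel. part_est l s n z) =
    (\<Sum>k\<in>{..<l} \<times> {..<l}.
      let I = rect_members l s n k;
          nk = card I;
          m = nat \<lfloor>sqrt (real nk) + 1/2\<rfloor>;
          xs = sort (map (\<lambda>v. fst (s v)) (sorted_list_of_set I));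
          ys = sort (map (\<lambda>v. snd (s v)) (sorted_list_of_set I))
      in real nk / real n * spacing_mass xs m * spacing_mass ys m)"
  (is "_ = ?rhs")
proof -
  have "(LINT z|lborel. part_est l s n z) =
    (\<Sum>k\<in>{..<l} \<times> {..<l}.
      let I = rect_members l s n k;
          nk = card I;
          m = nat \<lfloor>sqrt (real nk) + 1/2\<rfloor>;
          xs = sort (map (\<lambda>v. fst (s v)) (sorted_list_of_set I));
          ys = sort (map (\<lambda>v. snd (s v)) (sorted_list_of_set I))
      in \<Sum>i\<in>{0 .. int nk}. \<Sum>j\<in>{0 .. int nk}.
           (real nk / real n) * (4 * (real m)^2) /
                 ((real nk)^2 * (ord_stat xs (i + int m) - ord_stat xs (i - int m))
                              * (ord_stat ys (j + int m) - ord_stat ys (j - int m)))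
           * (measure lborel {ss_point xs m i <.. ss_point xs m (i + 1)}
              * measure lborel {ss_point ys m j <.. ss_point ys m (j + 1)}))"
    unfolding part_est_def Let_def indicator_box_eq
    by (simp only: Bochner_Integration.integral_sum Bochner_Integration.integrable_sum
        integrable_mult_right integrable_box integral_mult_right_zero integral_box)
  also have "\<dots> = ?rhs"
    unfolding Let_def
    by (intro sum.cong refl rectangle_integral sorted_sort) (use round_sqrt_bounds in auto)
  finally show ?thesis .
qed

subsection \<open>Convergence for samples without ties\<close>

lemma sum_card_rect_members:
  assumes "l \<ge> 1"
  shows "(\<Sum>k\<in>{..<l} \<times> {..<l}. card (rect_members l s n k)) = n"
proof -
  define g where "g v = (cell_index (xmin s n) (xmax s n) l (fst (s v)),
                         cell_index (ymin s n) (ymax s n) l (snd (s v)))" for v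
  have "rect_members l s n k = {v \<in> {..<n}. g v = k}" for k
    by (auto simp: rect_members_def g_def prod_eq_iff)
  moreover have "g ` {..<n} \<subseteq> {..<l} \<times> {..<l}"
    using assms by (auto simp: g_def cell_index_def)
  ultimately show ?thesis
    using sum.group[of "{..<n}" "{..<l} \<times> {..<l}" g "\<lambda>_. 1 :: nat"] by simp
qed

lemma abs_mult_sub_one_le:
  fixes a b e :: real
  assumes "\<bar>a - 1\<bar> \<le> e" "\<bar>b - 1\<bar> \<le> e" "e \<le> 1"
  shows "\<bar>a * b - 1\<bar> \<le> 3 * e"
proof -
  have "a * b - 1 = (a - 1) * (b - 1) + (a - 1) + (b - 1)" by algebra
  moreover have "\<bar>(a - 1) * (b - 1)\<bar> \<le> e * 1"
    unfolding abs_mult by (rule mult_mono) (use assms in auto)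
  ultimately show ?thesis using assms by linarith
qed

lemma abs_convex_comb_sub_le:
  fixes w p :: "'k \<Rightarrow> real"
  assumes "finite K" "sum w K = 1" "\<And>k. k \<in> K \<Longrightarrow> 0 \<le> w k" "\<And>k. k \<in> K \<Longrightarrow> \<bar>p k - c\<bar> \<le> e"
  shows "\<bar>(\<Sum>k\<in>K. w k * p k) - c\<bar> \<le> e"
proof -
  have "\<bar>(\<Sum>k\<in>K. w k * p k) - c\<bar> = \<bar>\<Sum>k\<in>K. w k * (p k - c)\<bar>"
    using assms(2) by (simp add: right_diff_distrib sum_subtractf sum_distrib_right[symmetric])
  also have "\<dots> \<le> (\<Sum>k\<in>K. w k * e)"
    by (rule order_trans[OF sum_abs sum_mono]) (use assms in \<open>auto simp: abs_mult intro: mult_left_mono\<close>)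
  also have "\<dots> = e" using assms(2) by (simp add: sum_distrib_right[symmetric])
  finally show ?thesis .
qed

lemma abs_part_est_integral_sub_one_le:
  assumes "l \<ge> 1" and "N \<ge> 25" and card: "\<And>k. k \<in> {..<l} \<times> {..<l} \<Longrightarrow> N \<le> card (rect_members l s n k)"
    and inj_x: "inj (\<lambda>v. fst (s v))" and inj_y: "inj (\<lambda>v. snd (s v))"
  shows "\<bar>(LINT z|lborel. part_est l s n z) - 1\<bar> \<le> 15 / sqrt (real N)"
proof -
  define K where "K = {..<l} \<times> {..<l}"
  define nk where "nk k = card (rect_members l s n k)" for k
  define m where "m k = nat \<lfloor>sqrt (real (nk k)) + 1/2\<rfloor>" for k
  define xs where "xs k = sort (map (\<lambda>v. fst (s v)) (sorted_list_of_set (rect_members l s n k)))" for k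
  define ys where "ys k = sort (map (\<lambda>v. snd (s v)) (sorted_list_of_set (rect_members l s n k)))" for k
  define e where "e = 5 / sqrt (real N)"
  have fin: "finite (rect_members l s n k)" for k unfolding rect_members_def by simp
  have nk: "N \<le> nk k" "1 \<le> nk k" if "k \<in> K" for k
    using card[of k] that assms(2) unfolding K_def nk_def by auto
  have "5 \<le> sqrt (real N)" by (rule real_le_rsqrt) (use assms(2) in simp)
  then have e: "e \<le> 1" "3 * e = 15 / sqrt (real N)" unfolding e_def by (simp_all add: divide_le_eq)
  have mass: "\<bar>spacing_mass (sort (map h (sorted_list_of_set (rect_members l s n k)))) (m k) - 1\<bar> \<le> e"
    if "k \<in> K" and "inj h" for k and h :: "nat \<Rightarrow> real"
  proof -
    have "inj_on h (set (sorted_list_of_set (rect_members l s n k)))"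
      using \<open>inj h\<close> by (rule inj_on_subset) simp
    then show ?thesis
      using abs_spacing_mass_round_sqrt_sub_one_le[of "map h (sorted_list_of_set (rect_members l s n k))" N]
        nk[OF \<open>k \<in> K\<close>] assms(2) by (simp add: distinct_map fin m_def nk_def e_def)
  qed
  have n: "n = (\<Sum>k\<in>K. nk k)" unfolding K_def nk_def using sum_card_rect_members[OF assms(1)] by simp
  have "(0, 0) \<in> K" unfolding K_def using assms(1) by simp
  then have "0 < n"
    unfolding n using member_le_sum[of "(0, 0)" K nk] nk(2)[of "(0, 0)"] by (simp add: K_def)
  then have "(\<Sum>k\<in>K. real (nk k) / real n) = 1"
    unfolding sum_divide_distrib[symmetric] by (simp add: n flip: of_nat_sum)
  then have "\<bar>(\<Sum>k\<in>K. real (nk k) / real n * (spacing_mass (xs k) (m k) * spacing_mass (ys k) (m k))) - 1\<bar>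
               \<le> 3 * e"
    using mass[OF _ inj_x, folded xs_def] mass[OF _ inj_y, folded ys_def] e(1)
    by (intro abs_convex_comb_sub_le abs_mult_sub_one_le) (auto simp: K_def)
  then show ?thesis
    unfolding part_est_integral Let_def K_def[symmetric] nk_def[symmetric] m_def[symmetric]
      xs_def[symmetric] ys_def[symmetric] e(2)[symmetric]
    by (simp only: mult.assoc)
qed

lemma part_est_integral_tendsto_one:
  assumes "\<forall>\<^sub>F n in sequentially. 1 \<le> l n"
    and "filterlim (\<lambda>n. Min ((\<lambda>k. card (rect_members (l n) s n k)) ` ({..<l n} \<times> {..<l n}))) at_top sequentially"
    and "inj (\<lambda>v. fst (s v))" "inj (\<lambda>v. snd (s v))"
  shows "(\<lambda>n. LINT z|lborel. part_est (l n) s n z) \<longlonglongrightarrow> 1"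
proof -
  define N where "N n = Min ((\<lambda>k. card (rect_members (l n) s n k)) ` ({..<l n} \<times> {..<l n}))" for n
  have N: "filterlim N at_top sequentially" using assms(2) unfolding N_def .
  have "\<forall>\<^sub>F n in sequentially. 25 \<le> N n" using N by (simp add: filterlim_at_top)
  with assms(1) have "\<forall>\<^sub>F n in sequentially.
      norm ((LINT z|lborel. part_est (l n) s n z) - 1) \<le> 15 / sqrt (real (N n))"
  proof eventually_elim
    case (elim n)
    show ?case unfolding real_norm_def
    proof (rule abs_part_est_integral_sub_one_le[OF elim _ assms(3,4)])
      fix k assume "k \<in> {..<l n} \<times> {..<l n}"
      then show "N n \<le> card (rect_members (l n) s n k)" unfolding N_def by (intro Min_le) auto
    qed
  qed
  moreover have "(\<lambda>n. 15 / sqrt (real (N n))) \<longlonglongrightarrow> 0"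
    by (intro tendsto_divide_0[OF tendsto_const] filterlim_at_top_imp_at_infinity
        filterlim_compose[OF sqrt_at_top] filterlim_compose[OF filterlim_real_sequentially N])
  ultimately have "(\<lambda>n. (LINT z|lborel. part_est (l n) s n z) - 1) \<longlonglongrightarrow> 0"
    by (rule Lim_null_comparison)
  then show ?thesis by (rule LIM_zero_cancel)
qed

subsection \<open>Ties have probability zero\<close>

lemma (in prob_space) AE_neq_if_indep_var_nonatomic:
  fixes X Y :: "'a \<Rightarrow> real"
  assumes indep: "indep_var borel X borel Y" and nonatomic: "\<And>y. emeasure (distr M borel Y) {y} = 0"
  shows "AE \<omega> in M. X \<omega> \<noteq> Y \<omega>"
proof -
  have [measurable]: "X \<in> borel_measurable M" "Y \<in> borel_measurable M"
    using indep by (auto dest: indep_var_rv1 indep_var_rv2)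
  interpret Y: prob_space "distr M borel Y" by (rule prob_space_distr) simp
  define diag where "diag = {p :: real \<times> real. fst p = snd p}"
  have diag_sets: "diag \<in> sets (borel \<Otimes>\<^sub>M borel)"
  proof -
    have "{p \<in> space (borel \<Otimes>\<^sub>M borel). fst p = (snd p :: real)} \<in> sets (borel \<Otimes>\<^sub>M borel)"
      by measurable
    then show ?thesis by (simp add: diag_def space_pair_measure)
  qed
  have "emeasure M {\<omega> \<in> space M. X \<omega> = Y \<omega>} = emeasure M ((\<lambda>\<omega>. (X \<omega>, Y \<omega>)) -` diag \<inter> space M)"
    by (rule arg_cong[where f = "emeasure M"]) (auto simp: diag_def)
  also have "\<dots> = emeasure (distr M (borel \<Otimes>\<^sub>M borel) (\<lambda>\<omega>. (X \<omega>, Y \<omega>))) diag"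
    by (rule emeasure_distr[symmetric]) (simp_all add: diag_sets)
  also have "distr M (borel \<Otimes>\<^sub>M borel) (\<lambda>\<omega>. (X \<omega>, Y \<omega>)) = distr M borel X \<Otimes>\<^sub>M distr M borel Y"
    using indep unfolding indep_var_distribution_eq by simp
  also have "emeasure \<dots> diag = (\<integral>\<^sup>+x. emeasure (distr M borel Y) (Pair x -` diag) \<partial>distr M borel X)"
    by (rule Y.emeasure_pair_measure_alt) (use diag_sets in simp)
  also have "\<dots> = 0"
    using nonatomic by (simp add: diag_def vimage_def)
  finally have "{\<omega> \<in> space M. X \<omega> = Y \<omega>} \<in> null_sets M" by auto
  then show ?thesis by (rule AE_I') auto
qed

lemma emeasure_distr_level_set_eq_0:
  fixes X :: "'a \<Rightarrow> 'b :: euclidean_space" and g :: "'b \<Rightarrow> real"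
  assumes "distributed M lborel X (\<lambda>z. ennreal (f z))"
    and [measurable]: "g \<in> borel_measurable borel" and "g -` {c} \<in> null_sets lborel"
  shows "emeasure (distr M borel (\<lambda>\<omega>. g (X \<omega>))) {c} = 0"
proof -
  have [measurable]: "X \<in> measurable M borel"
    using distributed_measurable[OF assms(1)] by simp
  have "emeasure (distr M borel (\<lambda>\<omega>. g (X \<omega>))) {c} = emeasure M (X -` (g -` {c}) \<inter> space M)"
    by (subst emeasure_distr) (auto intro!: arg_cong[where f = "emeasure M"])
  also have "\<dots> = (\<integral>\<^sup>+z. ennreal (f z) * indicator (g -` {c}) z \<partial>lborel)"
    by (rule distributed_emeasure[OF assms(1)]) (use assms(3) in auto)
  also have "\<dots> = 0"
    by (rule nn_integral_null_set[OF assms(3)])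
  finally show ?thesis .
qed

lemma (in prob_space) AE_inj_of_indep_vars_density:
  fixes Z :: "nat \<Rightarrow> 'a \<Rightarrow> 'b :: euclidean_space" and g :: "'b \<Rightarrow> real"
  assumes indep: "indep_vars (\<lambda>_. borel) Z UNIV"
    and density: "\<And>i. distributed M lborel (Z i) (\<lambda>z. ennreal (f z))"
    and [measurable]: "g \<in> borel_measurable borel" and null: "\<And>c. g -` {c} \<in> null_sets lborel"
  shows "AE \<omega> in M. inj (\<lambda>v. g (Z v \<omega>))"
proof -
  have "AE \<omega> in M. g (Z i \<omega>) \<noteq> g (Z j \<omega>)" if "i \<noteq> j" for i j
  proof (rule AE_neq_if_indep_var_nonatomic)
    have "indep_var borel ((\<lambda>h. g (h i)) \<circ> (\<lambda>\<omega>. restrict (\<lambda>i. Z i \<omega>) {i}))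
                     borel ((\<lambda>h. g (h j)) \<circ> (\<lambda>\<omega>. restrict (\<lambda>i. Z i \<omega>) {j}))"
      by (rule indep_var_compose[OF indep_var_restrict[OF indep]]) (use that in auto)
    then show "indep_var borel (\<lambda>\<omega>. g (Z i \<omega>)) borel (\<lambda>\<omega>. g (Z j \<omega>))"
      by (simp add: o_def)
    show "emeasure (distr M borel (\<lambda>\<omega>. g (Z j \<omega>))) {c} = 0" for c
      by (rule emeasure_distr_level_set_eq_0[OF density]) (simp_all add: null)
  qed
  then have "AE \<omega> in M. \<forall>i j. i \<noteq> j \<longrightarrow> g (Z i \<omega>) \<noteq> g (Z j \<omega>)"
    by (simp add: AE_all_countable)
  then show ?thesis by eventually_elim (auto intro: injI)
qed

lemma null_sets_lborel_vimage_fst: "fst -` {c} \<in> null_sets (lborel :: (real \<times> real) measure)"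
proof -
  have "{c} \<times> (UNIV :: real set) \<in> null_sets (lborel \<Otimes>\<^sub>M lborel)"
    by (rule lborel.times_in_null_sets1) auto
  moreover have "fst -` {c} = {c} \<times> (UNIV :: real set)" by auto
  ultimately show ?thesis by (simp add: lborel_prod)
qed

lemma null_sets_lborel_vimage_snd: "snd -` {c} \<in> null_sets (lborel :: (real \<times> real) measure)"
proof -
  have "(UNIV :: real set) \<times> {c} \<in> null_sets (lborel \<Otimes>\<^sub>M lborel)"
    by (rule lborel.times_in_null_sets2) auto
  moreover have "snd -` {c} = (UNIV :: real set) \<times> {c}" by auto
  ultimately show ?thesis by (simp add: lborel_prod)
qed

theorem proposition3:
  fixes M :: "'a measure" and Z :: "nat \<Rightarrow> 'a \<Rightarrow> real \<times> real"
    and f :: "real \<times> real \<Rightarrow> real" and l :: "nat \<Rightarrow> nat"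
  assumes "prob_space M"
    and "prob_space.indep_vars M (\<lambda>_. borel) Z UNIV"
    and "\<And>i. distributed M lborel (Z i) (\<lambda>z. ennreal (f z))"
    and "\<And>z. 0 \<le> f z"
    and "continuous_on UNIV f"
    and "filterlim l at_top sequentially"
    and "(\<lambda>n. real (l n) ^ 2) \<in> o(\<lambda>n. real n)"
    and "AE \<omega> in M. filterlim
           (\<lambda>n. Min ((\<lambda>k. card (rect_members (l n) (\<lambda>v. Z v \<omega>) n k)) ` ({..<l n} \<times> {..<l n})))
           at_top sequentially"
  shows "AE \<omega> in M. (\<lambda>n. LINT z|lborel. part_est (l n) (\<lambda>v. Z v \<omega>) n z) \<longlonglongrightarrow> 1"
proof -
  interpret prob_space M by fact
  have l: "\<forall>\<^sub>F n in sequentially. 1 \<le> l n"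
    using assms(6) by (simp add: filterlim_at_top)
  have "AE \<omega> in M. inj (\<lambda>v. fst (Z v \<omega>))"
    by (rule AE_inj_of_indep_vars_density[OF assms(2,3) _ null_sets_lborel_vimage_fst])
      (intro borel_measurable_continuous_onI continuous_intros)
  moreover have "AE \<omega> in M. inj (\<lambda>v. snd (Z v \<omega>))"
    by (rule AE_inj_of_indep_vars_density[OF assms(2,3) _ null_sets_lborel_vimage_snd])
      (intro borel_measurable_continuous_onI continuous_intros)
  ultimately show ?thesis using assms(8)
  proof eventually_elim
    case (elim \<omega>)
    show ?case by (rule part_est_integral_tendsto_one[OF l elim(3,1,2)])
  qed
qed

end
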